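(* Consider the model in the context with $\bar e=0$. For $\mathcal U\subseteq\mathcal U_0$ and $\mathcal C\subseteq\mathcal C_0$ define $f(\mathcal U,\mathcal C)$ as follows: if $|\mathcal C|\ge K$, $f(\mathcal U,\mathcal C)=\max_R E(\mathcal U,\mathcal C,R)$, the maximum over all recommendations $R$ such that $(\mathcal U,\mathcal C)$ is a stable set with recommendation $R$ (undefined if no such $R$ exists); if $|\mathcal C|<K$, $f(\mathcal U,\mathcal C)$ is defined in the same way but in the modified instance where each user receives exactly $|\mathcal C|$ recommendations instead of $K$. Then for every $\mathcal U\subseteq\mathcal U_0$, all $c_0,c_1\in\mathcal C_0$ and every $\mathcal C\subseteq\mathcal C_0\setminus\{c_0,c_1\}$, $$f(\mathcal U,\mathcal C\cup\{c_0,c_1\})-f(\mathcal U,\mathcal C\cup\{c_1\})\le f(\mathcal U,\mathcal C\cup\{c_0\})-f(\mathcal U,\mathcal C),$$ whenever all four terms are well-defined. This holds for every value of $K$.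
   Context: An instance consists of a dimension $D\ge 1$, users $\mathcal U_0=\{1,\dots,U\}$ with types $u_i\in\mathbb R^D_{\ge0}$, creators $\mathcal C_0=\{1,\dots,C\}$ with types $c_j\in\mathbb R^D_{\ge 0}$, all types of Euclidean norm $1$, a positive integer $K$, a creator threshold $\bar a\in\mathbb N_0$ and a user threshold $\bar e\in[0,1]$. For $\mathcal U\subseteq\mathcal U_0$, $\mathcal C\subseteq\mathcal C_0$, a recommendation $R$ assigns to each $i\in\mathcal U$ a set $R(i)\subseteq\mathcal C$; its total engagement is $E(\mathcal U,\mathcal C,R)=\sum_{i\in\mathcal U}\sum_{j\in R(i)}u_i^Tc_j$. The pair $(\mathcal U,\mathcal C)$ is a stable set with recommendation $R$ if $|R(i)|=K$ and $u_i^Tc_j\ge\bar e$ for all $i\in\mathcal U$, $j\in R(i)$, and $|\{i\in\mathcal U: j\in R(i)\}|\ge\bar a$ for every $j\in\mathcal C$. *)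

theory Defs
  imports "HOL-Analysis.Analysis"
begin

text \<open>Types are vectors in real^'d (dimension D = CARD('d) >= 1).
  u i / c j are the types of user i / creator j.  Users are {1..nU}, creators {1..nC}.\<close>

definition valid_types :: "nat \<Rightarrow> (nat \<Rightarrow> real^'d) \<Rightarrow> bool" where
  "valid_types n v \<longleftrightarrow> (\<forall>i\<in>{1..n}. (\<forall>k. v i $ k \<ge> 0) \<and> norm (v i) = 1)"

definition engagement ::
  "(nat \<Rightarrow> real^'d) \<Rightarrow> (nat \<Rightarrow> real^'d) \<Rightarrow> nat set \<Rightarrow> (nat \<Rightarrow> nat set) \<Rightarrow> real" where
  "engagement u c Us R = (\<Sum>i\<in>Us. \<Sum>j\<in>R i. inner (u i) (c j))"

definition stable_with ::
  "(nat \<Rightarrow> real^'d) \<Rightarrow> (nat \<Rightarrow> real^'d) \<Rightarrow> nat \<Rightarrow> nat \<Rightarrow> real \<Rightarrow>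
   nat set \<Rightarrow> nat set \<Rightarrow> (nat \<Rightarrow> nat set) \<Rightarrow> bool" where
  "stable_with u c k a e Us Cs R \<longleftrightarrow>
     (\<forall>i\<in>Us. R i \<subseteq> Cs \<and> card (R i) = k \<and> (\<forall>j\<in>R i. inner (u i) (c j) \<ge> e)) \<and>
     (\<forall>j\<in>Cs. card {i\<in>Us. j \<in> R i} \<ge> a)"

text \<open>None encodes "undefined" (no stable recommendation exists).\<close>
definition fval ::
  "(nat \<Rightarrow> real^'d) \<Rightarrow> (nat \<Rightarrow> real^'d) \<Rightarrow> nat \<Rightarrow> nat \<Rightarrow>
   nat set \<Rightarrow> nat set \<Rightarrow> real option" where
  "fval u c K a Us Cs =
     (let k = (if card Cs \<ge> K then K else card Cs) in
      if (\<exists>R. stable_with u c k a 0 Us Cs R)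
      then Some (Max {engagement u c Us R | R. stable_with u c k a 0 Us Cs R})
      else None)"

end

theory Submission
  imports Defs
begin

(*
  Let A be an optimal stable recommendation for Cs + {c0, c1} and B one for Cs. If K <= |Cs|,
  we build stable recommendations P for Cs + {c0} and Q for Cs + {c1} such that, for every user,
  P i and Q i have the same union and the same intersection as A i and B i. Then
  E(P) + E(Q) = E(A) + E(B), so f(Cs + {c0}) + f(Cs + {c1}) >= f(Cs + {c0, c1}) + f(Cs).
  Each user keeps A i Int B i on both sides, gives c0 to P and c1 to Q, and splits the rest of
  A i and B i between P i and Q i so that both get K creators. That the split can keep at least
  a users for every creator of Cs on both sides is a discharging argument: minimise the total
  shortfall; a creator short on one side starts a chain of single-user exchanges ending at a
  creator with a surplus, and such a chain exists by double counting.
  If |Cs| < K, every user is recommended all of Cs, Cs + {c0} and Cs + {c1}, and the inequality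
  follows from the nonnegativity of the engagements u_i^T c_j.
*)

lemma sum_remove2:
  assumes "finite A" "x \<in> A" "y \<in> A" "x \<noteq> y"
  shows "sum f A = f x + f y + sum f (A - {x, y})"
proof -
  have "A = insert x (insert y (A - {x, y}))" using assms by auto
  then have "sum f A = sum f (insert x (insert y (A - {x, y})))" by simp
  also have "\<dots> = f x + f y + sum f (A - {x, y})"
    using assms by (simp add: add.assoc)
  finally show ?thesis .
qed

lemma relpow_Diff_or_shortcut:
  assumes "(x, y) \<in> E ^^ n"
  shows "(x, y) \<in> (E - F) ^^ n \<or> (\<exists>(p, q) \<in> E \<inter> F. \<exists>k<n. (q, y) \<in> E ^^ k)"
  using assms
proof (induction n arbitrary: x)
  case 0
  then show ?case by (intro disjI1) simp
next
  case (Suc n)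
  from relpow_Suc_D2[OF Suc.prems] obtain z where xz: "(x, z) \<in> E" and zy: "(z, y) \<in> E ^^ n"
    by blast
  show ?case
  proof (cases "(x, z) \<in> F")
    case True
    with xz zy show ?thesis by blast
  next
    case False
    from Suc.IH[OF zy] show ?thesis
    proof
      assume "(z, y) \<in> (E - F) ^^ n"
      with xz False have "(x, y) \<in> (E - F) ^^ Suc n" by (intro relpow_Suc_I2) auto
      then show ?thesis ..
    next
      assume "\<exists>(p, q) \<in> E \<inter> F. \<exists>k<n. (q, y) \<in> E ^^ k"
      then show ?thesis by (blast intro: less_SucI)
    qed
  qed
qed

lemma relpow_mono: "(A :: ('a \<times> 'a) set) \<subseteq> B \<Longrightarrow> (x, y) \<in> A ^^ n \<Longrightarrow> (x, y) \<in> B ^^ n"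
  using relpowp_mono[of "\<lambda>x y. (x, y) \<in> A" "\<lambda>x y. (x, y) \<in> B" n x y]
  by (auto simp: relpowp_relpow_eq)

(*
  Every user i splits its creators D i into a part T i of prescribed size p i and the rest
  D i - T i, and every creator j should lie in at least m j parts of each kind. The split S
  meets these demands but has the wrong sizes.
*)
locale balanced_split =
  fixes I :: "'i set" and C :: "'c set" and D S :: "'i \<Rightarrow> 'c set" and m :: "'c \<Rightarrow> nat"
  assumes finite_I: "finite I" and finite_C: "finite C"
    and D_subset: "i \<in> I \<Longrightarrow> D i \<subseteq> C" and S_subset: "i \<in> I \<Longrightarrow> S i \<subseteq> D i"
    and m_le_S: "j \<in> C \<Longrightarrow> m j \<le> card {i\<in>I. j \<in> S i}"
    and m_le_D_minus_S: "j \<in> C \<Longrightarrow> m j \<le> card {i\<in>I. j \<in> D i - S i}"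
begin

definition hits :: "('i \<Rightarrow> 'c set) \<Rightarrow> 'c \<Rightarrow> nat" where
  "hits T j = card {i\<in>I. j \<in> T i}"

definition misses :: "('i \<Rightarrow> 'c set) \<Rightarrow> 'c \<Rightarrow> nat" where
  "misses T j = card {i\<in>I. j \<in> D i - T i}"

definition splits :: "('i \<Rightarrow> nat) \<Rightarrow> ('i \<Rightarrow> 'c set) \<Rightarrow> bool" where
  "splits p T \<longleftrightarrow> (\<forall>i\<in>I. T i \<subseteq> D i \<and> card (T i) = p i)"

definition deficit_at :: "('i \<Rightarrow> 'c set) \<Rightarrow> 'c \<Rightarrow> nat" where
  "deficit_at T j = (m j - hits T j) + (m j - misses T j)"

definition deficit :: "('i \<Rightarrow> 'c set) \<Rightarrow> nat" where
  "deficit T = (\<Sum>j\<in>C. deficit_at T j)"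

definition swap_graph :: "('i \<Rightarrow> 'c set) \<Rightarrow> ('c \<times> 'c) set" where
  "swap_graph T = {(x, y). \<exists>i\<in>I. x \<in> T i \<and> y \<in> D i - T i}"

definition exchange :: "('i \<Rightarrow> 'c set) \<Rightarrow> 'i \<Rightarrow> 'c \<Rightarrow> 'c \<Rightarrow> 'i \<Rightarrow> 'c set" where
  "exchange T i x y = T(i := insert y (T i - {x}))"

lemma finite_D: "i \<in> I \<Longrightarrow> finite (D i)"
  using D_subset finite_C finite_subset by blast

lemma hits_plus_misses:
  assumes "\<forall>i\<in>I. T i \<subseteq> D i"
  shows "hits T j + misses T j = card {i\<in>I. j \<in> D i}"
proof -
  have "{i\<in>I. j \<in> D i} = {i\<in>I. j \<in> T i} \<union> {i\<in>I. j \<in> D i - T i}"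
    using assms by auto
  then show ?thesis
    unfolding hits_def misses_def using finite_I by (simp add: card_Un_disjoint disjoint_iff)
qed

lemma double_m_le: "j \<in> C \<Longrightarrow> 2 * m j \<le> card {i\<in>I. j \<in> D i}"
  using hits_plus_misses[of S j] S_subset m_le_S m_le_D_minus_S
  unfolding hits_def misses_def by fastforce

lemma splits_exchange:
  assumes "splits p T" "i \<in> I" "x \<in> T i" "y \<in> D i - T i"
  shows "splits p (exchange T i x y)"
proof -
  have "finite (T i)" using assms finite_D finite_subset unfolding splits_def by blast
  then have "card (T i) > 0" using assms(3) card_gt_0_iff by blast
  with assms \<open>finite (T i)\<close> show ?thesis
    unfolding splits_def exchange_def by (auto simp: card_insert_if)
qed

lemma exchange_counts:
  assumes "T i \<subseteq> D i" "i \<in> I" "x \<in> T i" "y \<in> D i - T i"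
  shows "hits (exchange T i x y) x + 1 = hits T x"
    and "misses (exchange T i x y) x = misses T x + 1"
    and "hits (exchange T i x y) y = hits T y + 1"
    and "misses (exchange T i x y) y + 1 = misses T y"
    and "j \<noteq> x \<Longrightarrow> j \<noteq> y \<Longrightarrow> hits (exchange T i x y) j = hits T j"
    and "j \<noteq> x \<Longrightarrow> j \<noteq> y \<Longrightarrow> misses (exchange T i x y) j = misses T j"
proof -
  let ?T' = "exchange T i x y"
  have "x \<noteq> y" using assms by auto
  then have hx: "{k\<in>I. x \<in> ?T' k} = {k\<in>I. x \<in> T k} - {i}"
    and mx: "{k\<in>I. x \<in> D k - ?T' k} = insert i {k\<in>I. x \<in> D k - T k}"
    and hy: "{k\<in>I. y \<in> ?T' k} = insert i {k\<in>I. y \<in> T k}"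
    and my: "{k\<in>I. y \<in> D k - ?T' k} = {k\<in>I. y \<in> D k - T k} - {i}"
    using assms unfolding exchange_def by auto
  have fin: "finite {k\<in>I. P k}" for P using finite_I by simp
  have "i \<in> {k\<in>I. x \<in> T k}" "i \<in> {k\<in>I. y \<in> D k - T k}"
    using assms by auto
  from this[THEN card_Suc_Diff1[OF fin]]
  show "hits ?T' x + 1 = hits T x" "misses ?T' y + 1 = misses T y"
    unfolding hits_def misses_def hx my by simp_all
  have "i \<notin> {k\<in>I. x \<in> D k - T k}" "i \<notin> {k\<in>I. y \<in> T k}"
    using assms by auto
  with finite_I show "misses ?T' x = misses T x + 1" "hits ?T' y = hits T y + 1"
    unfolding hits_def misses_def mx hy by simp_all
  assume "j \<noteq> x" "j \<noteq> y"
  then have "{k\<in>I. j \<in> ?T' k} = {k\<in>I. j \<in> T k}" "{k\<in>I. j \<in> D k - ?T' k} = {k\<in>I. j \<in> D k - T k}"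
    unfolding exchange_def by auto
  then show "hits ?T' j = hits T j" "misses ?T' j = misses T j"
    unfolding hits_def misses_def by simp_all
qed

lemma deficit_exchange:
  assumes T: "splits p T" and i: "i \<in> I" "x \<in> T i" "y \<in> D i - T i"
    and x: "x \<in> C" "misses T x < m x"
  shows "deficit (exchange T i x y) \<le> deficit T"
    and "m y < misses T y \<Longrightarrow> deficit (exchange T i x y) < deficit T"
proof -
  let ?T' = "exchange T i x y"
  have TD: "\<forall>k\<in>I. T k \<subseteq> D k" using T unfolding splits_def by blast
  have "T i \<subseteq> D i" using TD i(1) by blast
  note counts = exchange_counts[of T i x y, OF this i]
  have "y \<in> C" "x \<noteq> y" using i D_subset by auto
  have "hits T x + misses T x = card {k\<in>I. x \<in> D k}"
    using hits_plus_misses[OF TD] .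
  moreover have "2 * m x \<le> card {k\<in>I. x \<in> D k}" using double_m_le[OF x(1)] .
  moreover have "hits ?T' x + 1 = hits T x" "misses ?T' x = misses T x + 1"
    using counts by simp_all
  ultimately have dx: "deficit_at ?T' x + 1 = deficit_at T x"
    using x(2) unfolding deficit_at_def by linarith
  have "hits ?T' y = hits T y + 1" "misses ?T' y + 1 = misses T y"
    using counts by simp_all
  then have dy: "deficit_at ?T' y \<le> deficit_at T y + 1"
    and dy_surplus: "m y < misses T y \<Longrightarrow> deficit_at ?T' y \<le> deficit_at T y"
    unfolding deficit_at_def by linarith+
  have "deficit_at ?T' j = deficit_at T j" if "j \<notin> {x, y}" for j
    using that counts(5,6)[of j] unfolding deficit_at_def by simp
  then have rest: "(\<Sum>j\<in>C - {x, y}. deficit_at ?T' j) = (\<Sum>j\<in>C - {x, y}. deficit_at T j)"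
    by (intro sum.cong) auto
  have split: "deficit U = deficit_at U x + deficit_at U y + (\<Sum>j\<in>C - {x, y}. deficit_at U j)" for U
    unfolding deficit_def using finite_C x(1) \<open>y \<in> C\<close> \<open>x \<noteq> y\<close> by (rule sum_remove2)
  show "deficit ?T' \<le> deficit T"
    using split[of ?T'] split[of T] dx dy rest by linarith
  show "m y < misses T y \<Longrightarrow> deficit ?T' < deficit T"
    using split[of ?T'] split[of T] dx dy_surplus rest by linarith
qed

lemma swap_graph_exchange:
  "swap_graph T - ({x} \<times> UNIV \<union> UNIV \<times> {y}) \<subseteq> swap_graph (exchange T i x y)"
  unfolding swap_graph_def exchange_def by auto

lemma deficit_reducible_along_path:
  assumes "splits p T" "a \<in> C" "misses T a < m a" "m g < misses T g"
    and "(a, g) \<in> swap_graph T ^^ n"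
  shows "\<exists>T'. splits p T' \<and> deficit T' < deficit T"
  using assms
proof (induction n arbitrary: T a rule: less_induct)
  case (less n)
  note T = less.prems(1) and a = less.prems(2,3) and g = less.prems(4) and path = less.prems(5)
  have "n \<noteq> 0"
  proof
    assume "n = 0"
    with path have "a = g" by simp
    with a(2) g show False by simp
  qed
  then obtain k where n: "n = Suc k" using not0_implies_Suc by blast
  from relpow_Suc_D2[OF path[unfolded n]] obtain b
    where ab: "(a, b) \<in> swap_graph T" and bg: "(b, g) \<in> swap_graph T ^^ k"
    by blast
  then obtain i where i: "i \<in> I" "a \<in> T i" "b \<in> D i - T i"
    unfolding swap_graph_def by blast
  have "T i \<subseteq> D i" using T i(1) unfolding splits_def by blast
  note counts = exchange_counts[of T i a b, OF this i]
  let ?T' = "exchange T i a b"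
  have T': "splits p ?T'" using splits_exchange[OF T i] .
  show ?case
  proof (cases "m b < misses T b")
    case True
    then show ?thesis using T' deficit_exchange(2)[OF T i a] by blast
  next
    case False
    (* The exchange only destroys edges leaving a or entering b; a path through one of them
       gives a shorter path from a to g in T itself. *)
    let ?F = "{a} \<times> UNIV \<union> UNIV \<times> {b}"
    from relpow_Diff_or_shortcut[OF bg, of ?F] show ?thesis
    proof
      assume "(b, g) \<in> (swap_graph T - ?F) ^^ k"
      then have path': "(b, g) \<in> swap_graph ?T' ^^ k"
        by (rule relpow_mono[OF swap_graph_exchange])
      have "b \<in> C" using i D_subset by blast
      have "misses ?T' b < m b" using counts(4) False by linarith
      have "g \<noteq> a" "g \<noteq> b" using a(2) g False by auto
      then have "m g < misses ?T' g" using counts(6) g by simp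
      from less.IH[OF _ T' \<open>b \<in> C\<close> \<open>misses ?T' b < m b\<close> this path'] n
      obtain T'' where "splits p T''" "deficit T'' < deficit ?T'"
        by blast
      then show ?thesis using deficit_exchange(1)[OF T i a] by (auto intro: less_le_trans)
    next
      assume "\<exists>(x, y) \<in> swap_graph T \<inter> ?F. \<exists>k'<k. (y, g) \<in> swap_graph T ^^ k'"
      then obtain q k' where k': "k' < k" "(q, g) \<in> swap_graph T ^^ k'"
        and "(a, q) \<in> swap_graph T \<or> q = b"
        by blast
      with ab have "(a, q) \<in> swap_graph T" by blast
      from relpow_Suc_I2[OF this k'(2)] have "(a, g) \<in> swap_graph T ^^ Suc k'" .
      moreover have "Suc k' < n" using n k'(1) by simp
      ultimately show ?thesis using less.IH T a g by blast
    qed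
  qed
qed

lemma surplus_reachable:
  assumes T: "splits p T" and room: "\<forall>i\<in>I. card (S i) + p i \<le> card (D i)"
    and a: "a \<in> C" "misses T a < m a"
  shows "\<exists>g. m g < misses T g \<and> (a, g) \<in> (swap_graph T)\<^sup>*"
proof (rule ccontr)
  assume no_surplus: "\<not> ?thesis"
  define J where "J = {j\<in>C. (a, j) \<in> (swap_graph T)\<^sup>*}"
  have "finite J" using finite_C by (simp add: J_def)
  have double_count: "(\<Sum>j\<in>J. card {i\<in>I. j \<in> X i}) = (\<Sum>i\<in>I. card {j\<in>J. j \<in> X i})" for X
    by (rule sum_multicount_gen[OF finite_I \<open>finite J\<close>, symmetric]) simp
  have per_user: "card {j\<in>J. j \<in> S i} \<le> card {j\<in>J. j \<in> D i - T i}" if i: "i \<in> I" for i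
  proof (cases "T i \<inter> J = {}")
    case True
    then have "{j\<in>J. j \<in> S i} \<subseteq> {j\<in>J. j \<in> D i - T i}" using S_subset[OF i] by auto
    then show ?thesis using \<open>finite J\<close> by (intro card_mono) auto
  next
    case False
    then obtain x where x: "x \<in> T i" "(a, x) \<in> (swap_graph T)\<^sup>*" unfolding J_def by blast
    have "(a, y) \<in> (swap_graph T)\<^sup>*" if "y \<in> D i - T i" for y
    proof (rule rtrancl_into_rtrancl[OF x(2)])
      show "(x, y) \<in> swap_graph T" using that x(1) i unfolding swap_graph_def by blast
    qed
    then have "D i - T i \<subseteq> J" using D_subset[OF i] unfolding J_def by blast
    then have "{j\<in>J. j \<in> D i - T i} = D i - T i" by blast
    moreover have "T i \<subseteq> D i" "card (T i) = p i" using T i unfolding splits_def by auto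
    then have "card (D i - T i) = card (D i) - p i"
      using card_Diff_subset finite_D[OF i] finite_subset by metis
    moreover have "card {j\<in>J. j \<in> S i} \<le> card (S i)"
      using S_subset[OF i] finite_D[OF i] by (intro card_mono) (auto intro: finite_subset)
    moreover have "card (S i) + p i \<le> card (D i)" using room i by blast
    ultimately show ?thesis by simp
  qed
  have "(\<Sum>j\<in>J. misses T j) < (\<Sum>j\<in>J. card {i\<in>I. j \<in> S i})"
  proof (rule sum_strict_mono_ex1[OF \<open>finite J\<close>])
    have "misses T j \<le> m j" if "j \<in> J" for j
      using that no_surplus unfolding J_def by (auto simp: not_less)
    then show "\<forall>j\<in>J. misses T j \<le> card {i\<in>I. j \<in> S i}"
      using m_le_S unfolding J_def by (blast intro: order_trans)
    have "a \<in> J" using a(1) unfolding J_def by simp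
    then show "\<exists>j\<in>J. misses T j < card {i\<in>I. j \<in> S i}"
      using a m_le_S by (blast intro: less_le_trans)
  qed
  also have "\<dots> \<le> (\<Sum>j\<in>J. misses T j)"
    unfolding misses_def double_count using per_user by (rule sum_mono)
  finally show False by simp
qed

lemma deficit_reducible_at_misses:
  assumes "splits p T" "\<forall>i\<in>I. card (S i) + p i \<le> card (D i)" "a \<in> C" "misses T a < m a"
  shows "\<exists>T'. splits p T' \<and> deficit T' < deficit T"
proof -
  obtain g where g: "m g < misses T g" "(a, g) \<in> (swap_graph T)\<^sup>*"
    using surplus_reachable[OF assms] by blast
  from rtrancl_imp_relpow[OF g(2)] obtain n where "(a, g) \<in> swap_graph T ^^ n" ..
  from deficit_reducible_along_path[OF assms(1,3,4) g(1) this] show ?thesis .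
qed

lemma complement_split:
  assumes "splits p T"
  shows "splits (\<lambda>i. card (D i) - p i) (\<lambda>i. D i - T i)"
    and "hits (\<lambda>i. D i - T i) = misses T" and "misses (\<lambda>i. D i - T i) = hits T"
    and "deficit (\<lambda>i. D i - T i) = deficit T"
proof -
  show "splits (\<lambda>i. card (D i) - p i) (\<lambda>i. D i - T i)"
    using assms finite_D unfolding splits_def by (auto simp: card_Diff_subset finite_subset)
  show hits: "hits (\<lambda>i. D i - T i) = misses T"
    unfolding hits_def misses_def ..
  have "{i\<in>I. j \<in> D i - (D i - T i)} = {i\<in>I. j \<in> T i}" for j
    using assms unfolding splits_def by auto
  then show misses: "misses (\<lambda>i. D i - T i) = hits T"
    unfolding hits_def misses_def by simp
  show "deficit (\<lambda>i. D i - T i) = deficit T"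
    unfolding deficit_def deficit_at_def hits misses by (simp add: add.commute)
qed

lemma deficit_reducible:
  assumes T: "splits p T" and bounds: "\<forall>i\<in>I. card (S i) \<le> p i \<and> card (S i) + p i \<le> card (D i)"
    and "deficit T > 0"
  shows "\<exists>T'. splits p T' \<and> deficit T' < deficit T"
proof -
  obtain j where j: "j \<in> C" "deficit_at T j > 0"
    using assms(3) sum_eq_0_iff[OF finite_C, of "deficit_at T"] unfolding deficit_def by auto
  then consider "misses T j < m j" | "hits T j < m j"
    unfolding deficit_at_def by linarith
  then show ?thesis
  proof cases
    case 1
    then show ?thesis using deficit_reducible_at_misses T bounds j(1) by blast
  next
    case 2
    let ?p' = "\<lambda>i. card (D i) - p i"
    note T_compl = complement_split[OF T]
    have "\<forall>i\<in>I. card (S i) + ?p' i \<le> card (D i)" using bounds by auto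
    with 2 obtain T' where T': "splits ?p' T'" "deficit T' < deficit T"
      using deficit_reducible_at_misses[OF T_compl(1) _ j(1)] T_compl by auto
    have "splits p (\<lambda>i. D i - T' i)"
      using complement_split(1)[OF T'(1)] bounds unfolding splits_def by auto
    moreover have "deficit (\<lambda>i. D i - T' i) < deficit T"
      using complement_split(4)[OF T'(1)] T'(2) by simp
    ultimately show ?thesis by blast
  qed
qed

theorem balanced_split_exists:
  assumes bounds: "\<forall>i\<in>I. card (S i) \<le> p i \<and> card (S i) + p i \<le> card (D i)"
  shows "\<exists>T. splits p T \<and> (\<forall>j\<in>C. m j \<le> hits T j \<and> m j \<le> misses T j)"
proof -
  have "\<forall>i\<in>I. \<exists>X. X \<subseteq> D i \<and> card X = p i"
    using bounds by (meson le_add2 order_trans obtain_subset_with_card_n)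
  then obtain T0 where "splits p T0" unfolding splits_def by metis
  then obtain T where T: "splits p T" and min: "\<And>T'. splits p T' \<Longrightarrow> deficit T \<le> deficit T'"
    using ex_has_least_nat[of "splits p" T0 deficit] by blast
  have "deficit T = 0"
  proof (rule ccontr)
    assume "deficit T \<noteq> 0"
    then obtain T' where "splits p T'" "deficit T' < deficit T"
      using deficit_reducible[OF T bounds] by blast
    with min show False by (meson not_le)
  qed
  then have "deficit_at T j = 0" if "j \<in> C" for j
    using that finite_C unfolding deficit_def by simp
  then show ?thesis using T unfolding deficit_at_def by auto
qed

end

lemma valid_types_inner_nonneg:
  assumes "valid_types nU u" "valid_types nC c" "i \<in> {1..nU}" "j \<in> {1..nC}"
  shows "0 \<le> inner (u i) (c j)"
  using assms unfolding valid_types_def inner_vec_def by (auto intro: sum_nonneg)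

lemma engagement_cong:
  "(\<And>i. i \<in> Us \<Longrightarrow> R i = R' i) \<Longrightarrow> engagement u c Us R = engagement u c Us R'"
  unfolding engagement_def by simp

lemma engagement_union_inter:
  assumes "\<And>i. i \<in> Us \<Longrightarrow> finite (P i)" "\<And>i. i \<in> Us \<Longrightarrow> finite (Q i)"
  shows "engagement u c Us P + engagement u c Us Q
       = engagement u c Us (\<lambda>i. P i \<union> Q i) + engagement u c Us (\<lambda>i. P i \<inter> Q i)"
  using assms unfolding engagement_def by (simp add: sum.distrib[symmetric] sum.union_inter)

lemma engagement_le_full:
  assumes "finite X" "\<And>i. i \<in> Us \<Longrightarrow> R i \<subseteq> X"
    and "\<And>i j. i \<in> Us \<Longrightarrow> j \<in> X \<Longrightarrow> 0 \<le> inner (u i) (c j)"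
  shows "engagement u c Us R \<le> engagement u c Us (\<lambda>_. X)"
  unfolding engagement_def using assms by (intro sum_mono sum_mono2) auto

lemma finite_stable_engagements:
  assumes "finite Us" "finite X"
  shows "finite {engagement u c Us R | R. stable_with u c k a e Us X R}"
proof -
  have "{engagement u c Us R | R. stable_with u c k a e Us X R}
      \<subseteq> engagement u c Us ` (Us \<rightarrow>\<^sub>E Pow X)"
  proof clarify
    fix R assume "stable_with u c k a e Us X R"
    then have "restrict R Us \<in> Us \<rightarrow>\<^sub>E Pow X" unfolding stable_with_def by auto
    moreover have "engagement u c Us R = engagement u c Us (restrict R Us)"
      by (rule engagement_cong) simp
    ultimately show "engagement u c Us R \<in> engagement u c Us ` (Us \<rightarrow>\<^sub>E Pow X)" by blast
  qed
  moreover have "finite (Us \<rightarrow>\<^sub>E Pow X)" using assms by (simp add: finite_PiE)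
  ultimately show ?thesis by (rule finite_subset[OF _ finite_imageI])
qed

lemma fval_SomeD:
  assumes "fval u c K a Us X = Some v" "finite Us" "finite X"
  shows "\<exists>R. stable_with u c (min K (card X)) a 0 Us X R \<and> engagement u c Us R = v"
    and "stable_with u c (min K (card X)) a 0 Us X R \<Longrightarrow> engagement u c Us R \<le> v"
proof -
  let ?E = "{engagement u c Us R | R. stable_with u c (min K (card X)) a 0 Us X R}"
  have ex: "\<exists>R. stable_with u c (min K (card X)) a 0 Us X R" and v: "v = Max ?E"
    using assms(1) unfolding fval_def Let_def min_def[symmetric] by (auto split: if_splits)
  have "finite ?E" using finite_stable_engagements[OF assms(2,3)] .
  moreover have "?E \<noteq> {}" using ex by blast
  ultimately show "\<exists>R. stable_with u c (min K (card X)) a 0 Us X R \<and> engagement u c Us R = v"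
    using Max_in v by fastforce
  show "stable_with u c (min K (card X)) a 0 Us X R \<Longrightarrow> engagement u c Us R \<le> v"
    using Max_ge[OF \<open>finite ?E\<close>] v by blast
qed

lemma stable_with_all_creators:
  assumes "stable_with u c (card X) a e Us X R" "finite X" "i \<in> Us"
  shows "R i = X"
  using assms card_subset_eq unfolding stable_with_def by blast

lemma fval_Some_full:
  assumes "fval u c K a Us X = Some v" "finite Us" "finite X" "card X \<le> K"
  shows "v = engagement u c Us (\<lambda>_. X)"
proof -
  from fval_SomeD(1)[OF assms(1-3)] assms(4) obtain R
    where "stable_with u c (card X) a 0 Us X R" "engagement u c Us R = v"
    by (auto simp: min_absorb2)
  with stable_with_all_creators[OF _ assms(3)] show ?thesis
    by (metis engagement_cong)
qed

lemma stable_with_from_split: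
  assumes fin: "finite Us" "finite Cs" and c0: "c0 \<notin> Cs"
    and A: "stable_with u c k a e Us (Cs \<union> {c0, c1}) A" and B: "stable_with u c k a e Us Cs B"
    and T_sub: "\<And>i. i \<in> Us \<Longrightarrow> T i \<subseteq> (A i - B i) \<inter> Cs \<union> (B i - A i)"
    and T_card: "\<And>i. i \<in> Us \<Longrightarrow> card (T i) = card (A i - B i - {c0})"
    and T_hits: "\<And>j. j \<in> Cs \<Longrightarrow> a \<le> card {i\<in>Us. j \<in> A i \<inter> B i} + card {i\<in>Us. j \<in> T i}"
  shows "stable_with u c k a e Us (Cs \<union> {c0}) (\<lambda>i. A i \<inter> (B i \<union> {c0}) \<union> T i)"
proof -
  let ?P = "\<lambda>i. A i \<inter> (B i \<union> {c0}) \<union> T i"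
  have "?P i \<subseteq> Cs \<union> {c0} \<and> card (?P i) = k \<and> (\<forall>j\<in>?P i. e \<le> inner (u i) (c j))"
    if i: "i \<in> Us" for i
  proof (intro conjI)
    have A_i: "A i \<subseteq> Cs \<union> {c0, c1}" "card (A i) = k" "\<forall>j\<in>A i. e \<le> inner (u i) (c j)"
      using A i unfolding stable_with_def by auto
    have B_i: "B i \<subseteq> Cs" "\<forall>j\<in>B i. e \<le> inner (u i) (c j)"
      using B i unfolding stable_with_def by auto
    show "?P i \<subseteq> Cs \<union> {c0}"
      using T_sub[OF i] B_i(1) by blast
    show "\<forall>j\<in>?P i. e \<le> inner (u i) (c j)"
      using T_sub[OF i] A_i(3) B_i(2) by blast
    have "finite (A i)" using A_i(1) fin(2) finite_subset by auto
    moreover have "T i \<subseteq> Cs" using T_sub[OF i] B_i(1) by blast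
    then have "finite (T i)" using fin(2) by (rule finite_subset)
    moreover have "A i \<inter> (B i \<union> {c0}) \<inter> T i = {}"
      using T_sub[OF i] B_i(1) c0 by blast
    ultimately have "card (?P i) = card (A i \<inter> (B i \<union> {c0})) + card (A i - B i - {c0})"
      using T_card[OF i] by (simp add: card_Un_disjoint)
    also have "\<dots> = card (A i \<inter> (B i \<union> {c0}) \<union> (A i - B i - {c0}))"
      using \<open>finite (A i)\<close> by (intro card_Un_disjoint[symmetric]) auto
    also have "A i \<inter> (B i \<union> {c0}) \<union> (A i - B i - {c0}) = A i" by blast
    finally show "card (?P i) = k" using A_i(2) by simp
  qed
  moreover have "a \<le> card {i\<in>Us. j \<in> ?P i}" if j: "j \<in> Cs \<union> {c0}" for j
  proof (cases "j = c0")
    case True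
    have "a \<le> card {i\<in>Us. c0 \<in> A i}" using A unfolding stable_with_def by blast
    also have "\<dots> \<le> card {i\<in>Us. j \<in> ?P i}" using True fin(1) by (intro card_mono) auto
    finally show ?thesis .
  next
    case False
    with j have "j \<in> Cs" by blast
    have "{i\<in>Us. j \<in> A i \<inter> B i} \<inter> {i\<in>Us. j \<in> T i} = {}" using T_sub by blast
    then have "card {i\<in>Us. j \<in> A i \<inter> B i} + card {i\<in>Us. j \<in> T i}
        = card ({i\<in>Us. j \<in> A i \<inter> B i} \<union> {i\<in>Us. j \<in> T i})"
      using fin(1) by (intro card_Un_disjoint[symmetric]) auto
    also have "\<dots> \<le> card {i\<in>Us. j \<in> ?P i}" using fin(1) by (intro card_mono) auto
    finally show ?thesis using T_hits[OF \<open>j \<in> Cs\<close>] by linarith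
  qed
  ultimately show ?thesis unfolding stable_with_def by blast
qed

lemma card_exchange_parts:
  assumes "finite X" "finite Y" "card X = card Y"
    and "X \<subseteq> Cs \<union> {c0, c1}" "c0 \<notin> Cs" "c1 \<notin> Cs" "c0 \<noteq> c1"
  shows "card ((X - Y) \<inter> Cs \<union> (Y - X)) = card ((X - Y) \<inter> Cs) + card (X - Y)"
    and "card (X - Y - {c0}) + card (X - Y - {c1}) = card (X - Y) + card ((X - Y) \<inter> Cs)"
proof -
  have "card (Y - X) = card (X - Y)"
    using assms(1-3) by (simp add: card_Diff_subset_Int Int_commute)
  then show "card ((X - Y) \<inter> Cs \<union> (Y - X)) = card ((X - Y) \<inter> Cs) + card (X - Y)"
    using assms(1,2) by (subst card_Un_disjoint) auto
  have "(X - Y - {c0}) \<union> (X - Y - {c1}) = X - Y" using assms(7) by blast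
  moreover have "(X - Y - {c0}) \<inter> (X - Y - {c1}) = (X - Y) \<inter> Cs" using assms(4-6) by blast
  ultimately show "card (X - Y - {c0}) + card (X - Y - {c1}) = card (X - Y) + card ((X - Y) \<inter> Cs)"
    using card_Un_Int assms(1) by (metis finite_Diff)
qed

lemma balanced_split_stable_pair:
  assumes fin: "finite Us" "finite Cs"
    and A: "stable_with u c k a e Us (Cs \<union> {c0, c1}) A" and B: "stable_with u c k a e Us Cs B"
  shows "balanced_split Us Cs (\<lambda>i. (A i - B i) \<inter> Cs \<union> (B i - A i)) (\<lambda>i. (A i - B i) \<inter> Cs)
    (\<lambda>j. a - card {i\<in>Us. j \<in> A i \<inter> B i})"
proof
  show "finite Us" "finite Cs" by (fact fin)+
  show "(A i - B i) \<inter> Cs \<union> (B i - A i) \<subseteq> Cs" if "i \<in> Us" for i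
    using B that unfolding stable_with_def by auto
  show "(A i - B i) \<inter> Cs \<subseteq> (A i - B i) \<inter> Cs \<union> (B i - A i)" for i
    by blast
  fix j assume "j \<in> Cs"
  then have "a \<le> card {i\<in>Us. j \<in> A i}" "a \<le> card {i\<in>Us. j \<in> B i}"
    using A B unfolding stable_with_def by auto
  moreover have "card {i\<in>Us. j \<in> A i}
      = card {i\<in>Us. j \<in> A i \<inter> B i} + card {i\<in>Us. j \<in> (A i - B i) \<inter> Cs}"
    and "card {i\<in>Us. j \<in> B i}
      = card {i\<in>Us. j \<in> A i \<inter> B i} + card {i\<in>Us. j \<in> (A i - B i) \<inter> Cs \<union> (B i - A i) - (A i - B i) \<inter> Cs}"
    using \<open>j \<in> Cs\<close> fin(1)
    by (subst card_Un_disjoint[symmetric]; fastforce intro: arg_cong[where f = card])+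
  ultimately show "a - card {i\<in>Us. j \<in> A i \<inter> B i} \<le> card {i\<in>Us. j \<in> (A i - B i) \<inter> Cs}"
    and "a - card {i\<in>Us. j \<in> A i \<inter> B i}
      \<le> card {i\<in>Us. j \<in> (A i - B i) \<inter> Cs \<union> (B i - A i) - (A i - B i) \<inter> Cs}"
    by linarith+
qed

lemma stable_with_exchange:
  assumes fin: "finite Us" "finite Cs" and c01: "c0 \<notin> Cs" "c1 \<notin> Cs" "c0 \<noteq> c1"
    and A: "stable_with u c k a e Us (Cs \<union> {c0, c1}) A" and B: "stable_with u c k a e Us Cs B"
  obtains P Q
  where "stable_with u c k a e Us (Cs \<union> {c0}) P" "stable_with u c k a e Us (Cs \<union> {c1}) Q"
    and "\<And>i. i \<in> Us \<Longrightarrow> P i \<union> Q i = A i \<union> B i" "\<And>i. i \<in> Us \<Longrightarrow> P i \<inter> Q i = A i \<inter> B i"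
proof -
  define S where "S i = (A i - B i) \<inter> Cs" for i
  define D where "D i = S i \<union> (B i - A i)" for i
  define m where "m j = a - card {i\<in>Us. j \<in> A i \<inter> B i}" for j
  define p where "p i = card (A i - B i - {c0})" for i
  interpret split: balanced_split Us Cs D S m
    unfolding D_def S_def m_def by (rule balanced_split_stable_pair[OF fin A B])
  have A_i: "A i \<subseteq> Cs \<union> {c0, c1}" "finite (A i)" if "i \<in> Us" for i
    using A that fin(2) finite_subset unfolding stable_with_def by auto
  have B_i: "B i \<subseteq> Cs" "finite (B i)" if "i \<in> Us" for i
    using B that fin(2) finite_subset unfolding stable_with_def by auto
  have card_parts: "card (D i) = card (S i) + card (A i - B i)"
    "card (A i - B i - {c0}) + card (A i - B i - {c1}) = card (A i - B i) + card (S i)"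
    if "i \<in> Us" for i
    using card_exchange_parts[OF A_i(2)[OF that] B_i(2)[OF that] _ A_i(1)[OF that] c01] A B that
    unfolding D_def S_def stable_with_def by auto
  have "\<forall>i\<in>Us. card (S i) \<le> p i \<and> card (S i) + p i \<le> card (D i)"
  proof
    fix i assume i: "i \<in> Us"
    have "S i \<subseteq> A i - B i - {c0}" "A i - B i - {c0} \<subseteq> A i - B i"
      unfolding S_def using c01(1) by auto
    then show "card (S i) \<le> p i \<and> card (S i) + p i \<le> card (D i)"
      unfolding p_def card_parts(1)[OF i] using A_i(2)[OF i] by (auto intro: card_mono)
  qed
  then obtain T where "split.splits p T"
    and T_balanced: "\<forall>j\<in>Cs. m j \<le> split.hits T j \<and> m j \<le> split.misses T j"
    using split.balanced_split_exists by blast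
  then have T_i: "T i \<subseteq> D i" "card (T i) = p i" if "i \<in> Us" for i
    using that unfolding split.splits_def by auto
  let ?P = "\<lambda>i. A i \<inter> (B i \<union> {c0}) \<union> T i"
  let ?Q = "\<lambda>i. A i \<inter> (B i \<union> {c1}) \<union> (D i - T i)"
  show ?thesis
  proof
    show "stable_with u c k a e Us (Cs \<union> {c0}) ?P"
    proof (rule stable_with_from_split[OF fin c01(1) A B])
      show "T i \<subseteq> (A i - B i) \<inter> Cs \<union> (B i - A i)" "card (T i) = card (A i - B i - {c0})"
        if "i \<in> Us" for i
        using T_i[OF that] unfolding D_def S_def p_def by auto
      show "a \<le> card {i\<in>Us. j \<in> A i \<inter> B i} + card {i\<in>Us. j \<in> T i}" if "j \<in> Cs" for j
        using T_balanced that unfolding m_def split.hits_def by fastforce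
    qed
    have A': "stable_with u c k a e Us (Cs \<union> {c1, c0}) A" using A by (simp add: insert_commute)
    show "stable_with u c k a e Us (Cs \<union> {c1}) ?Q"
    proof (rule stable_with_from_split[OF fin c01(2) A' B])
      show "D i - T i \<subseteq> (A i - B i) \<inter> Cs \<union> (B i - A i)" for i
        unfolding D_def S_def by blast
      show "card (D i - T i) = card (A i - B i - {c1})" if i: "i \<in> Us" for i
      proof -
        have "finite (T i)"
          using T_i(1)[OF i] A_i(2)[OF i] B_i(2)[OF i] finite_subset unfolding D_def S_def by blast
        then have "card (D i - T i) = card (D i) - p i" using T_i[OF i] by (simp add: card_Diff_subset)
        then show ?thesis using card_parts[OF i] unfolding p_def by linarith
      qed
      show "a \<le> card {i\<in>Us. j \<in> A i \<inter> B i} + card {i\<in>Us. j \<in> D i - T i}" if "j \<in> Cs" for j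
        using T_balanced that unfolding m_def split.misses_def by fastforce
    qed
    show "?P i \<union> ?Q i = A i \<union> B i" "?P i \<inter> ?Q i = A i \<inter> B i" if "i \<in> Us" for i
      using T_i(1)[OF that] A_i(1)[OF that] B_i(1)[OF that] c01 unfolding D_def S_def by auto
  qed
qed

lemma fval_submodular_if_K_le_card:
  assumes fin: "finite Us" "finite Cs" and c01: "c0 \<notin> Cs" "c1 \<notin> Cs" "c0 \<noteq> c1"
    and "K \<le> card Cs"
    and f01: "fval u c K a Us (Cs \<union> {c0, c1}) = Some f01" and f1: "fval u c K a Us (Cs \<union> {c1}) = Some f1"
    and f0: "fval u c K a Us (Cs \<union> {c0}) = Some f0" and fe: "fval u c K a Us Cs = Some fe"
  shows "f01 + fe \<le> f0 + f1"
proof -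
  have K: "min K (card (Cs \<union> Y)) = K" if "finite Y" for Y
  proof -
    have "card Cs \<le> card (Cs \<union> Y)" using fin(2) that by (intro card_mono) auto
    with \<open>K \<le> card Cs\<close> show ?thesis by simp
  qed
  have "\<exists>R. stable_with u c K a 0 Us (Cs \<union> {c0, c1}) R \<and> engagement u c Us R = f01"
    using fval_SomeD(1)[OF f01 fin(1)] fin(2) K[of "{c0, c1}"] by simp
  then obtain A where A: "stable_with u c K a 0 Us (Cs \<union> {c0, c1}) A" "engagement u c Us A = f01"
    by blast
  have "\<exists>R. stable_with u c K a 0 Us Cs R \<and> engagement u c Us R = fe"
    using fval_SomeD(1)[OF fe fin] K[of "{}"] by simp
  then obtain B where B: "stable_with u c K a 0 Us Cs B" "engagement u c Us B = fe"
    by blast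
  obtain P Q where P: "stable_with u c K a 0 Us (Cs \<union> {c0}) P"
    and Q: "stable_with u c K a 0 Us (Cs \<union> {c1}) Q"
    and PQ: "\<And>i. i \<in> Us \<Longrightarrow> P i \<union> Q i = A i \<union> B i" "\<And>i. i \<in> Us \<Longrightarrow> P i \<inter> Q i = A i \<inter> B i"
    using stable_with_exchange[OF fin c01 A(1) B(1)] by blast
  have finite_rec: "i \<in> Us \<Longrightarrow> finite (R i)" if "stable_with u c K a 0 Us X R" "finite X" for R X i
    using that finite_subset unfolding stable_with_def by blast
  have "engagement u c Us P + engagement u c Us Q
      = engagement u c Us (\<lambda>i. P i \<union> Q i) + engagement u c Us (\<lambda>i. P i \<inter> Q i)"
    using P Q fin(2) by (intro engagement_union_inter) (auto elim: finite_rec)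
  also have "\<dots> = engagement u c Us (\<lambda>i. A i \<union> B i) + engagement u c Us (\<lambda>i. A i \<inter> B i)"
    using PQ by (simp cong: engagement_cong)
  also have "\<dots> = engagement u c Us A + engagement u c Us B"
    using A(1) B(1) fin(2) by (intro engagement_union_inter[symmetric]) (auto elim: finite_rec)
  finally have "engagement u c Us P + engagement u c Us Q = f01 + fe" using A(2) B(2) by simp
  moreover have "engagement u c Us P \<le> f0"
    using fval_SomeD(2)[OF f0 fin(1)] P fin(2) K[of "{c0}"] by simp
  moreover have "engagement u c Us Q \<le> f1"
    using fval_SomeD(2)[OF f1 fin(1)] Q fin(2) K[of "{c1}"] by simp
  ultimately show ?thesis by linarith
qed

lemma fval_submodular_if_card_less_K:
  assumes fin: "finite Us" "finite Cs" and c01: "c0 \<notin> Cs" "c1 \<notin> Cs" "c0 \<noteq> c1"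
    and "card Cs < K"
    and nonneg: "\<And>i j. i \<in> Us \<Longrightarrow> j \<in> Cs \<union> {c0, c1} \<Longrightarrow> 0 \<le> inner (u i) (c j)"
    and f01: "fval u c K a Us (Cs \<union> {c0, c1}) = Some f01" and f1: "fval u c K a Us (Cs \<union> {c1}) = Some f1"
    and f0: "fval u c K a Us (Cs \<union> {c0}) = Some f0" and fe: "fval u c K a Us Cs = Some fe"
  shows "f01 + fe \<le> f0 + f1"
proof -
  let ?E = "\<lambda>X. engagement u c Us (\<lambda>_. X)"
  have "fe = ?E Cs" "f0 = ?E (Cs \<union> {c0})" "f1 = ?E (Cs \<union> {c1})"
    using fval_Some_full[OF fe fin] fval_Some_full[OF f0 fin(1)] fval_Some_full[OF f1 fin(1)]
      \<open>card Cs < K\<close> fin(2) c01 by auto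
  moreover obtain A where "stable_with u c (min K (card (Cs \<union> {c0, c1}))) a 0 Us (Cs \<union> {c0, c1}) A"
    "engagement u c Us A = f01"
    using fval_SomeD(1)[OF f01 fin(1)] fin(2) by auto
  then have "f01 \<le> ?E (Cs \<union> {c0, c1})"
    using engagement_le_full[of "Cs \<union> {c0, c1}" Us A] fin(2) nonneg unfolding stable_with_def by auto
  moreover have "?E (Cs \<union> {c0}) + ?E (Cs \<union> {c1}) = ?E (Cs \<union> {c0, c1}) + ?E Cs"
    using engagement_union_inter[of Us "\<lambda>_. Cs \<union> {c0}" "\<lambda>_. Cs \<union> {c1}"] fin(2) c01
    by (simp add: insert_commute)
  ultimately show ?thesis by linarith
qed

theorem proposition2:
  fixes u c :: "nat \<Rightarrow> real^'d"
    and nU nC K a :: nat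
    and Us Cs :: "nat set"
    and c0 c1 :: nat
    and f0 f1 f01 fe :: real
  assumes "valid_types nU u" and "valid_types nC c" and "K > 0"
    and "Us \<subseteq> {1..nU}"
    and "c0 \<in> {1..nC}" and "c1 \<in> {1..nC}" and "c0 \<noteq> c1"
    and "Cs \<subseteq> {1..nC} - {c0, c1}"
    and "fval u c K a Us (Cs \<union> {c0, c1}) = Some f01"
    and "fval u c K a Us (Cs \<union> {c1}) = Some f1"
    and "fval u c K a Us (Cs \<union> {c0}) = Some f0"
    and "fval u c K a Us Cs = Some fe"
  shows "f01 - f1 \<le> f0 - fe"
proof -
  have fin: "finite Us" "finite Cs"
    using finite_subset[OF assms(4)] finite_subset[OF assms(8)] by auto
  have c01: "c0 \<notin> Cs" "c1 \<notin> Cs" "c0 \<noteq> c1"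
    using assms(7,8) by auto
  have nonneg: "0 \<le> inner (u i) (c j)" if "i \<in> Us" "j \<in> Cs \<union> {c0, c1}" for i j
    using valid_types_inner_nonneg[OF assms(1,2)] that assms(4-6,8) by blast
  consider "K \<le> card Cs" | "card Cs < K" by linarith
  then have "f01 + fe \<le> f0 + f1"
  proof cases
    case 1
    from fval_submodular_if_K_le_card[OF fin c01 1 assms(9-12)] show ?thesis .
  next
    case 2
    from fval_submodular_if_card_less_K[OF fin c01 2 nonneg assms(9-12)] show ?thesis .
  qed
  then show ?thesis by linarith
qed

end
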